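(* Let $M\ge 2$ be an integer and $\varepsilon>0$. There exists a task set $\mathbf{T}$ (with $N=M^2-M+1$ tasks, all sharing one binary semaphore) such that, letting $OPT$ be the minimum makespan of $\mathbf{T}$ on $M$ processors over all feasible schedules, the following hold for every dependency graph $G^*$ of $\mathbf{T}$ with minimum critical path length: (i) every feasible schedule of $G^*$ on $M$ processors (under any paradigm, including global preemptive) has makespan at least $\left(2-\frac{2}{M}+\frac{1}{M^2}-\varepsilon\right)OPT$; (ii) every feasible semi-partitioned or partitioned schedule of $G^*$ on $M$ processors has makespan at least $\left(2-\frac{1}{M}-\varepsilon\right)OPT$. Hence the dependency graph approach, even with both steps solved optimally, has approximation ratio at least $2-\frac{2}{M}+\frac{1}{M^2}$ in general and at least $2-\frac{1}{M}$ under partitioned or semi-partitioned scheduling.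
   Context: Task model: there are $M$ identical processors and a set $\mathbf{T}$ of $N$ tasks. Each task $\tau_i$ releases exactly one job at time $0$, consisting of three subjobs that must be executed sequentially in this order: a first non-critical section of execution time $C_{i,1}\ge 0$, a critical section of execution time $A_{i,1}\ge 0$ guarded by a binary semaphore $\sigma_i\in\{s_1,\dots,s_z\}$, and a second non-critical section of execution time $C_{i,2}\ge 0$. A job may never execute on two processors at the same time. Critical sections guarded by the same semaphore must be executed mutually exclusively. The makespan of a schedule is the completion time of the last job. A global schedule may preempt and migrate arbitrarily; in a semi-partitioned schedule each subjob executes entirely on one processor; in a partitioned schedule all subjobs of a job execute on one processor. Dependency graph: a dependency graph $G$ of $\mathbf{T}$ is a directed graph whose vertices are the $3N$ subjobs $C_{i,1},A_{i,1},C_{i,2}$, weighted by their execution times, containing the edges $(C_{i,1},A_{i,1})$ and $(A_{i,1},C_{i,2})$ for every $i$, and, for each semaphore $s_k$ with $\mathbf{T}_k=\{\tau_i:\sigma_i=s_k\}$, a total order $\pi_k$ on $\mathbf{T}_k$ together with the edges $(A_{i,1},A_{j,1})$ whenever $\pi_k(\tau_i)=\pi_k(\tau_j)-1$ (no other edges). The length of a path is the sum of the weights of its vertices; $len(G)$ is the maximum length of a path in $G$. $G^*$ denotes a dependency graph minimizing $len(G)$. A feasible schedule of $G$ is a schedule of $\mathbf{T}$ in which every subjob starts only after all its predecessors in $G$ have completed. *)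

theory Defs
  imports Complex_Main
begin

text \<open>Subjobs of task i: first non-critical section, critical section,
  second non-critical section.\<close>
datatype subjob = Pre nat | Crit nat | Post nat

fun task_of :: "subjob \<Rightarrow> nat" where
  "task_of (Pre i) = i" | "task_of (Crit i) = i" | "task_of (Post i) = i"

text \<open>A task set: tasks 0 ..< ntasks; execution times C_{i,1}, A_{i,1}, C_{i,2};
  semaphore index of the critical section of each task.\<close>
record taskset =
  ntasks :: nat
  cpre   :: "nat \<Rightarrow> real"
  crit   :: "nat \<Rightarrow> real"
  cpost  :: "nat \<Rightarrow> real"
  sema   :: "nat \<Rightarrow> nat"

definition valid_taskset :: "taskset \<Rightarrow> bool" where
  "valid_taskset T \<longleftrightarrow>
     (\<forall>i < ntasks T. cpre T i \<ge> 0 \<and> crit T i \<ge> 0 \<and> cpost T i \<ge> 0)"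

fun wcet :: "taskset \<Rightarrow> subjob \<Rightarrow> real" where
  "wcet T (Pre i) = cpre T i" | "wcet T (Crit i) = crit T i" | "wcet T (Post i) = cpost T i"

definition subjobs :: "taskset \<Rightarrow> subjob set" where
  "subjobs T = {v. task_of v < ntasks T}"

text \<open>A schedule consists of a finite set of execution pieces (v, p, a, b):
  subjob v executes on processor p during the time interval [a, b), together
  with the start time and completion time of every subjob.\<close>
record schedule =
  pieces :: "(subjob \<times> nat \<times> real \<times> real) set"
  sstart :: "subjob \<Rightarrow> real"
  sfin   :: "subjob \<Rightarrow> real"

definition time_disjoint :: "real \<times> real \<Rightarrow> real \<times> real \<Rightarrow> bool" where
  "time_disjoint I J \<longleftrightarrow> snd I \<le> fst J \<or> snd J \<le> fst I"

definition valid_schedule :: "taskset \<Rightarrow> nat \<Rightarrow> schedule \<Rightarrow> bool" where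
  "valid_schedule T M S \<longleftrightarrow>
     finite (pieces S) \<and>
     (\<forall>(v,p,a,b) \<in> pieces S. v \<in> subjobs T \<and> p < M \<and> a < b
                              \<and> sstart S v \<le> a \<and> b \<le> sfin S v) \<and>
     (\<forall>v \<in> subjobs T. 0 \<le> sstart S v \<and> sstart S v \<le> sfin S v) \<and>
     \<comment> \<open>each subjob receives exactly its execution time\<close>
     (\<forall>v \<in> subjobs T. (\<Sum>(u,p,a,b) \<in> {x \<in> pieces S. fst x = v}. b - a) = wcet T v) \<and>
     \<comment> \<open>a processor executes at most one piece at a time\<close>
     (\<forall>(u,p,a,b) \<in> pieces S. \<forall>(u',p',a',b') \<in> pieces S.
        (u,p,a,b) \<noteq> (u',p',a',b') \<and> p = p' \<longrightarrow> time_disjoint (a,b) (a',b')) \<and>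
     \<comment> \<open>a job never executes on two processors at the same time\<close>
     (\<forall>(u,p,a,b) \<in> pieces S. \<forall>(u',p',a',b') \<in> pieces S.
        (u,p,a,b) \<noteq> (u',p',a',b') \<and> task_of u = task_of u' \<longrightarrow> time_disjoint (a,b) (a',b')) \<and>
     \<comment> \<open>subjobs of a job execute sequentially\<close>
     (\<forall>i < ntasks T. sfin S (Pre i) \<le> sstart S (Crit i) \<and> sfin S (Crit i) \<le> sstart S (Post i)) \<and>
     \<comment> \<open>mutual exclusion: the semaphore is held from start to completion of a critical section\<close>
     (\<forall>i < ntasks T. \<forall>j < ntasks T. i \<noteq> j \<and> sema T i = sema T j \<longrightarrow>
        time_disjoint (sstart S (Crit i), sfin S (Crit i)) (sstart S (Crit j), sfin S (Crit j)))"

definition makespan :: "taskset \<Rightarrow> schedule \<Rightarrow> real" where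
  "makespan T S = Max ((\<lambda>i. sfin S (Post i)) ` {..<ntasks T})"

definition semi_partitioned :: "schedule \<Rightarrow> bool" where
  "semi_partitioned S \<longleftrightarrow>
     (\<forall>(u,p,a,b) \<in> pieces S. \<forall>(u',p',a',b') \<in> pieces S. u = u' \<longrightarrow> p = p')"

definition partitioned :: "schedule \<Rightarrow> bool" where
  "partitioned S \<longleftrightarrow>
     (\<forall>(u,p,a,b) \<in> pieces S. \<forall>(u',p',a',b') \<in> pieces S. task_of u = task_of u' \<longrightarrow> p = p')"

definition OPT :: "taskset \<Rightarrow> nat \<Rightarrow> real" where
  "OPT T M = Inf (makespan T ` {S. valid_schedule T M S})"

text \<open>For each semaphore k, ord k lists the tasks using s_k in the chosen total order.\<close>
definition dep_graph_of :: "taskset \<Rightarrow> (nat \<Rightarrow> nat list) \<Rightarrow> (subjob \<times> subjob) set" where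
  "dep_graph_of T ord =
     {(Pre i, Crit i) | i. i < ntasks T} \<union> {(Crit i, Post i) | i. i < ntasks T} \<union>
     {(Crit (ord k ! j), Crit (ord k ! Suc j)) | k j. Suc j < length (ord k)}"

definition is_dep_graph :: "taskset \<Rightarrow> (subjob \<times> subjob) set \<Rightarrow> bool" where
  "is_dep_graph T G \<longleftrightarrow>
     (\<exists>ord. (\<forall>k. distinct (ord k) \<and> set (ord k) = {i. i < ntasks T \<and> sema T i = k})
            \<and> G = dep_graph_of T ord)"

definition is_path :: "taskset \<Rightarrow> (subjob \<times> subjob) set \<Rightarrow> subjob list \<Rightarrow> bool" where
  "is_path T G p \<longleftrightarrow> p \<noteq> [] \<and> distinct p \<and> set p \<subseteq> subjobs T \<and>
     (\<forall>j. Suc j < length p \<longrightarrow> (p ! j, p ! Suc j) \<in> G)"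

definition path_length :: "taskset \<Rightarrow> subjob list \<Rightarrow> real" where
  "path_length T p = sum_list (map (wcet T) p)"

definition len :: "taskset \<Rightarrow> (subjob \<times> subjob) set \<Rightarrow> real" where
  "len T G = Max (path_length T ` {p. is_path T G p})"

definition is_opt_dep_graph :: "taskset \<Rightarrow> (subjob \<times> subjob) set \<Rightarrow> bool" where
  "is_opt_dep_graph T G \<longleftrightarrow> is_dep_graph T G \<and> (\<forall>G'. is_dep_graph T G' \<longrightarrow> len T G \<le> len T G')"

definition feasible_for_graph :: "taskset \<Rightarrow> nat \<Rightarrow> (subjob \<times> subjob) set \<Rightarrow> schedule \<Rightarrow> bool" where
  "feasible_for_graph T M G S \<longleftrightarrow> valid_schedule T M S \<and>
     (\<forall>(u,v) \<in> G. sfin S u \<le> sstart S v)"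

end

theory Submission
  imports Defs "HOL-Library.FuncSet"
begin

text \<open>Take one long task 0, with first section \<open>1 + n d\<close> and critical section \<open>M - 1\<close>, and
  \<open>n = M (M - 1)\<close> short tasks with first section \<open>1\<close> and critical section \<open>d\<close>, all on one
  semaphore. Serving task 0 last in the chain gives critical path length \<open>M + n d\<close>, whereas any
  chain in which some \<open>Crit k\<close> follows \<open>Crit 0\<close> contains the longer path
  \<open>Pre 0, Crit 0, Crit k\<close>; so in every optimal dependency graph all critical sections precede
  that of task 0. A schedule respecting it must therefore finish all \<open>n + 1\<close> first sections
  before \<open>Crit 0\<close> starts at some time \<open>t\<close>, and ends no earlier than \<open>t + M - 1\<close>. Counting work
  on \<open>M\<close> processors gives \<open>t \<ge> M - 1 + 1/M\<close>; without migration of subjobs some processor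
  carries \<open>M\<close> unit first sections, so \<open>t \<ge> M\<close>. Meanwhile \<open>OPT \<le> M + 2 n d\<close>: run task 0
  on processor 0, followed by all critical sections, and spread the short first sections
  over the other \<open>M - 1\<close> processors. Letting \<open>d \<rightarrow> 0\<close> gives the two ratios.\<close>

section \<open>Valid schedules\<close>

abbreviation piece_length :: "subjob \<times> nat \<times> real \<times> real \<Rightarrow> real" where
  "piece_length \<equiv> \<lambda>(u, p, a, b). b - a"

lemma valid_schedule_finite_pieces: "valid_schedule T M S \<Longrightarrow> finite (pieces S)"
  unfolding valid_schedule_def by (elim conjE)

lemma valid_schedule_pieceD:
  assumes "valid_schedule T M S" and "(v, p, a, b) \<in> pieces S"
  shows "v \<in> subjobs T" and "p < M" and "a < b" and "sstart S v \<le> a" and "b \<le> sfin S v"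
proof -
  have "\<forall>(v, p, a, b) \<in> pieces S. v \<in> subjobs T \<and> p < M \<and> a < b \<and> sstart S v \<le> a \<and> b \<le> sfin S v"
    using assms(1) unfolding valid_schedule_def by (elim conjE) assumption
  then show "v \<in> subjobs T" and "p < M" and "a < b" and "sstart S v \<le> a" and "b \<le> sfin S v"
    using assms(2) by fast+
qed

lemma valid_schedule_subjobD:
  assumes "valid_schedule T M S" and "v \<in> subjobs T"
  shows "0 \<le> sstart S v" and "sstart S v \<le> sfin S v"
proof -
  have "\<forall>v \<in> subjobs T. 0 \<le> sstart S v \<and> sstart S v \<le> sfin S v"
    using assms(1) unfolding valid_schedule_def by (elim conjE) assumption
  then show "0 \<le> sstart S v" and "sstart S v \<le> sfin S v"
    using assms(2) by blast+
qed

lemma valid_schedule_work: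
  assumes "valid_schedule T M S" and "v \<in> subjobs T"
  shows "sum piece_length {x \<in> pieces S. fst x = v} = wcet T v"
proof -
  have "\<forall>v \<in> subjobs T. sum piece_length {x \<in> pieces S. fst x = v} = wcet T v"
    using assms(1) unfolding valid_schedule_def by (elim conjE) assumption
  then show ?thesis using assms(2) by blast
qed

lemma valid_schedule_sequential:
  assumes "valid_schedule T M S" and "i < ntasks T"
  shows "sfin S (Pre i) \<le> sstart S (Crit i)" and "sfin S (Crit i) \<le> sstart S (Post i)"
proof -
  have "\<forall>i < ntasks T. sfin S (Pre i) \<le> sstart S (Crit i) \<and> sfin S (Crit i) \<le> sstart S (Post i)"
    using assms(1) unfolding valid_schedule_def by (elim conjE) assumption
  then show "sfin S (Pre i) \<le> sstart S (Crit i)" and "sfin S (Crit i) \<le> sstart S (Post i)"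
    using assms(2) by blast+
qed

lemma valid_schedule_disjoint_pieces:
  assumes "valid_schedule T M S" and "x \<in> pieces S" and "y \<in> pieces S" and "x \<noteq> y"
    and "fst (snd x) = fst (snd y) \<or> task_of (fst x) = task_of (fst y)"
  shows "time_disjoint (snd (snd x)) (snd (snd y))"
proof -
  have proc: "\<forall>(u,p,a,b) \<in> pieces S. \<forall>(u',p',a',b') \<in> pieces S.
        (u,p,a,b) \<noteq> (u',p',a',b') \<and> p = p' \<longrightarrow> time_disjoint (a,b) (a',b')"
    using assms(1) unfolding valid_schedule_def by (elim conjE) assumption
  have task: "\<forall>(u,p,a,b) \<in> pieces S. \<forall>(u',p',a',b') \<in> pieces S.
        (u,p,a,b) \<noteq> (u',p',a',b') \<and> task_of u = task_of u' \<longrightarrow> time_disjoint (a,b) (a',b')"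
    using assms(1) unfolding valid_schedule_def by (elim conjE) assumption
  obtain u p a b u' p' a' b' where "x = (u, p, a, b)" and "y = (u', p', a', b')"
    by (cases x, cases y) auto
  with proc task assms(2-5) show ?thesis by fastforce
qed

lemma subjobs_eq:
  "subjobs T = Pre ` {..<ntasks T} \<union> Crit ` {..<ntasks T} \<union> Post ` {..<ntasks T}"
proof -
  have "v \<in> subjobs T \<longleftrightarrow> v \<in> Pre ` {..<ntasks T} \<union> Crit ` {..<ntasks T} \<union> Post ` {..<ntasks T}"
    for v by (cases v) (auto simp: subjobs_def)
  then show ?thesis by blast
qed

lemma finite_subjobs: "finite (subjobs T)"
  unfolding subjobs_eq by simp

lemma sum_disjoint_intervals_le:
  fixes st en :: "'x \<Rightarrow> real"
  assumes "finite X" and "lo \<le> hi" and "\<forall>x\<in>X. lo \<le> st x \<and> st x < en x \<and> en x \<le> hi"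
    and "\<forall>x\<in>X. \<forall>y\<in>X. x \<noteq> y \<longrightarrow> en x \<le> st y \<or> en y \<le> st x"
  shows "(\<Sum>x\<in>X. en x - st x) \<le> hi - lo"
  using assms
proof (induction X arbitrary: hi rule: finite_ranking_induct[where f = st])
  case empty
  then show ?case by simp
next
  case (insert x X)
  show ?case
  proof (cases "x \<in> X")
    case True
    then show ?thesis using insert by (simp add: insert_absorb)
  next
    case False
    \<comment> \<open>\<open>x\<close> starts last, so all other intervals end before it starts\<close>
    have "\<forall>y\<in>X. lo \<le> st y \<and> st y < en y \<and> en y \<le> st x"
      using insert.hyps(2) insert.prems(2,3) False by fastforce
    then have "(\<Sum>y\<in>X. en y - st y) \<le> st x - lo"
      using insert.IH[of "st x"] insert.prems by auto
    then show ?thesis using False insert.hyps(1) insert.prems(2) by simp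
  qed
qed

lemma sum_piece_length_le_window:
  assumes V: "valid_schedule T M S" and "Z \<subseteq> pieces S" and "lo \<le> hi"
    and "\<forall>(u, p, a, b) \<in> Z. lo \<le> a \<and> b \<le> hi"
    and "\<forall>x\<in>Z. \<forall>y\<in>Z. x \<noteq> y \<longrightarrow> time_disjoint (snd (snd x)) (snd (snd y))"
  shows "sum piece_length Z \<le> hi - lo"
proof -
  have "(\<Sum>x\<in>Z. snd (snd (snd x)) - fst (snd (snd x))) \<le> hi - lo"
  proof (rule sum_disjoint_intervals_le)
    show "finite Z"
      using assms(2) valid_schedule_finite_pieces[OF V] by (rule finite_subset)
    show "\<forall>x\<in>Z. lo \<le> fst (snd (snd x)) \<and> fst (snd (snd x)) < snd (snd (snd x)) \<and> snd (snd (snd x)) \<le> hi"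
      using assms(2,4) valid_schedule_pieceD(3)[OF V] by fastforce
  qed (use assms(3,5) in \<open>auto simp: time_disjoint_def\<close>)
  then show ?thesis by (simp add: split_beta)
qed

lemma wcet_le_execution_window:
  assumes V: "valid_schedule T M S" and v: "v \<in> subjobs T"
  shows "wcet T v \<le> sfin S v - sstart S v"
proof -
  let ?Z = "{x \<in> pieces S. fst x = v}"
  have "sum piece_length ?Z \<le> sfin S v - sstart S v"
  proof (rule sum_piece_length_le_window[OF V])
    show "sstart S v \<le> sfin S v" using valid_schedule_subjobD[OF V v] by simp
    show "\<forall>(u, p, a, b) \<in> ?Z. sstart S v \<le> a \<and> b \<le> sfin S v"
      using valid_schedule_pieceD(4,5)[OF V] by fastforce
    show "\<forall>x\<in>?Z. \<forall>y\<in>?Z. x \<noteq> y \<longrightarrow> time_disjoint (snd (snd x)) (snd (snd y))"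
      using valid_schedule_disjoint_pieces[OF V] by auto
  qed auto
  then show ?thesis using valid_schedule_work[OF V v] by simp
qed

lemma sum_wcet_eq_sum_piece_length:
  assumes V: "valid_schedule T M S" and Y: "Y \<subseteq> subjobs T"
  shows "sum (wcet T) Y = sum piece_length {x \<in> pieces S. fst x \<in> Y}"
proof -
  have "finite Y" using Y finite_subjobs by (rule finite_subset)
  have "sum piece_length {x \<in> pieces S. fst x \<in> Y} =
        (\<Sum>v\<in>Y. sum piece_length {x \<in> {x \<in> pieces S. fst x \<in> Y}. fst x = v})"
    by (rule sum.group[symmetric]) (use \<open>finite Y\<close> valid_schedule_finite_pieces[OF V] in auto)
  also have "\<dots> = sum (wcet T) Y"
  proof (rule sum.cong)
    fix v assume "v \<in> Y"
    then have "{x \<in> {x \<in> pieces S. fst x \<in> Y}. fst x = v} = {x \<in> pieces S. fst x = v}" by auto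
    then show "sum piece_length {x \<in> {x \<in> pieces S. fst x \<in> Y}. fst x = v} = wcet T v"
      using valid_schedule_work[OF V] \<open>v \<in> Y\<close> Y by auto
  qed simp
  finally show ?thesis by simp
qed

lemma processor_busy_before:
  assumes V: "valid_schedule T M S" and Y: "Y \<subseteq> subjobs T" and "0 \<le> t"
    and before: "\<forall>v\<in>Y. sfin S v \<le> t"
  shows "sum piece_length {x \<in> pieces S. fst x \<in> Y \<and> fst (snd x) = q} \<le> t"
proof -
  let ?Z = "{x \<in> pieces S. fst x \<in> Y \<and> fst (snd x) = q}"
  have "0 \<le> a \<and> b \<le> t" if "(v, p, a, b) \<in> pieces S" and "v \<in> Y" for v p a b
    using valid_schedule_pieceD(4,5)[OF V that(1)] valid_schedule_subjobD(1)[OF V] Y before that(2)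
    by (meson order_trans subsetD)
  then have "\<forall>(v, p, a, b) \<in> ?Z. 0 \<le> a \<and> b \<le> t" by auto
  then have "sum piece_length ?Z \<le> t - 0"
    by (rule sum_piece_length_le_window[OF V, rotated 2])
      (use \<open>0 \<le> t\<close> valid_schedule_disjoint_pieces[OF V] in auto)
  then show ?thesis by simp
qed

lemma work_before_le:
  assumes V: "valid_schedule T M S" and Y: "Y \<subseteq> subjobs T" and "0 \<le> t"
    and before: "\<forall>v\<in>Y. sfin S v \<le> t"
  shows "sum (wcet T) Y \<le> real M * t"
proof -
  let ?W = "{x \<in> pieces S. fst x \<in> Y}"
  have "(\<lambda>x. fst (snd x)) ` ?W \<subseteq> {..<M}"
    using valid_schedule_pieceD(2)[OF V] by fastforce
  then have "sum piece_length ?W = (\<Sum>q<M. sum piece_length {x \<in> ?W. fst (snd x) = q})"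
    by (intro sum.group[symmetric]) (use valid_schedule_finite_pieces[OF V] in auto)
  also have "\<dots> \<le> (\<Sum>q<M. t)"
    using processor_busy_before[OF V Y \<open>0 \<le> t\<close> before] by (intro sum_mono) (simp add: conj_assoc)
  finally show ?thesis using sum_wcet_eq_sum_piece_length[OF V Y] by simp
qed

lemma makespan_ge_fin_Post: "i < ntasks T \<Longrightarrow> sfin S (Post i) \<le> makespan T S"
  unfolding makespan_def by (intro Max_ge) auto

lemma makespan_ge_Crit:
  assumes V: "valid_schedule T M S" and i: "i < ntasks T"
  shows "sstart S (Crit i) + crit T i \<le> makespan T S"
proof -
  have sub: "Crit i \<in> subjobs T" "Post i \<in> subjobs T" using i by (auto simp: subjobs_def)
  have "sstart S (Crit i) + crit T i \<le> sfin S (Crit i)"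
    using wcet_le_execution_window[OF V sub(1)] by simp
  also have "\<dots> \<le> sfin S (Post i)"
    using valid_schedule_sequential(2)[OF V i] valid_schedule_subjobD(2)[OF V sub(2)] by simp
  also have "\<dots> \<le> makespan T S" using i by (rule makespan_ge_fin_Post)
  finally show ?thesis .
qed

lemma OPT_le_makespan:
  assumes "0 < ntasks T" and V: "valid_schedule T M S"
  shows "OPT T M \<le> makespan T S"
proof -
  have "0 \<le> makespan T S'" if "valid_schedule T M S'" for S'
  proof -
    have "Post 0 \<in> subjobs T" using \<open>0 < ntasks T\<close> by (simp add: subjobs_def)
    then show ?thesis
      using makespan_ge_fin_Post[OF \<open>0 < ntasks T\<close>, of S'] valid_schedule_subjobD[OF that] by force
  qed
  then have "bdd_below (makespan T ` {S. valid_schedule T M S})"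
    by (intro bdd_belowI[of _ 0]) auto
  then show ?thesis
    unfolding OPT_def using V by (intro cInf_lower) auto
qed

lemma OPT_ge:
  assumes "valid_schedule T M S" and "\<And>S. valid_schedule T M S \<Longrightarrow> L \<le> makespan T S"
  shows "L \<le> OPT T M"
  unfolding OPT_def using assms by (intro cInf_greatest) auto

lemma partitioned_imp_semi_partitioned: "partitioned S \<Longrightarrow> semi_partitioned S"
  unfolding partitioned_def semi_partitioned_def by (simp add: Ball_def split_paired_all)

lemma semi_partitioned_processor:
  assumes V: "valid_schedule T M S" and SP: "semi_partitioned S"
    and v: "v \<in> subjobs T" and "0 < wcet T v"
  obtains q where "q < M" and "\<forall>x\<in>pieces S. fst x = v \<longrightarrow> fst (snd x) = q"
proof -
  have "{x \<in> pieces S. fst x = v} \<noteq> {}"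
    using valid_schedule_work[OF V v] \<open>0 < wcet T v\<close> by force
  then obtain q a b where piece: "(v, q, a, b) \<in> pieces S" by auto
  have "\<forall>x\<in>pieces S. fst x = v \<longrightarrow> fst (snd x) = q"
    using SP piece unfolding semi_partitioned_def by fastforce
  with valid_schedule_pieceD(2)[OF V piece] show thesis by (rule that)
qed

lemma semi_partitioned_work_before:
  assumes V: "valid_schedule T M S" and SP: "semi_partitioned S"
    and Y: "Y \<subseteq> subjobs T" and "0 \<le> t" and before: "\<forall>v\<in>Y. sfin S v \<le> t"
    and unit: "\<forall>v\<in>Y. 1 \<le> wcet T v" and many: "M * (M - 1) < card Y"
  shows "real M \<le> t"
proof -
  have "\<forall>v\<in>Y. \<exists>q. q < M \<and> (\<forall>x\<in>pieces S. fst x = v \<longrightarrow> fst (snd x) = q)"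
  proof
    fix v assume "v \<in> Y"
    then have "v \<in> subjobs T" and "0 < wcet T v" using Y unit by force+
    then obtain q where "q < M" and "\<forall>x\<in>pieces S. fst x = v \<longrightarrow> fst (snd x) = q"
      by (rule semi_partitioned_processor[OF V SP])
    then show "\<exists>q. q < M \<and> (\<forall>x\<in>pieces S. fst x = v \<longrightarrow> fst (snd x) = q)" by blast
  qed
  from bchoice[OF this] obtain proc
    where proc: "\<forall>v\<in>Y. proc v < M \<and> (\<forall>x\<in>pieces S. fst x = v \<longrightarrow> fst (snd x) = proc v)"
    by blast
  have "finite Y" using Y finite_subjobs by (rule finite_subset)
  moreover have "Y \<noteq> {}" using many by auto
  ultimately obtain q where "q < M" and q: "card Y \<le> card (proc -` {q} \<inter> Y) * M"
    using pigeonhole_card[of proc Y "{..<M}"] proc by auto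
  define I where "I = proc -` {q} \<inter> Y"
  have "M * (M - 1) < M * card I"
    using less_le_trans[OF many q] unfolding I_def by (simp add: mult.commute)
  then have "M - 1 < card I" by (simp add: mult_less_cancel1)
  then have "M \<le> card I" by arith
  have "I \<subseteq> subjobs T" using Y unfolding I_def by auto
  have "real M \<le> of_nat (card I) * 1" using \<open>M \<le> card I\<close> by simp
  also have "\<dots> \<le> sum (wcet T) I"
    using unit unfolding I_def by (intro sum_bounded_below) auto
  also have "\<dots> = sum piece_length {x \<in> pieces S. fst x \<in> I}"
    by (rule sum_wcet_eq_sum_piece_length[OF V \<open>I \<subseteq> subjobs T\<close>])
  also have "{x \<in> pieces S. fst x \<in> I} = {x \<in> pieces S. fst x \<in> I \<and> fst (snd x) = q}"
    using proc unfolding I_def by auto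
  also have "sum piece_length \<dots> \<le> t"
    using before unfolding I_def
    by (intro processor_busy_before[OF V \<open>I \<subseteq> subjobs T\<close>[unfolded I_def] \<open>0 \<le> t\<close>]) auto
  finally show ?thesis .
qed

section \<open>Non-preemptive schedules\<close>

definition single_piece_schedule ::
    "taskset \<Rightarrow> (subjob \<Rightarrow> nat) \<Rightarrow> (subjob \<Rightarrow> real) \<Rightarrow> (subjob \<Rightarrow> real) \<Rightarrow> schedule" where
  "single_piece_schedule T proc st fin =
     \<lparr>pieces = (\<lambda>v. (v, proc v, st v, fin v)) ` {v \<in> subjobs T. 0 < wcet T v},
      sstart = st, sfin = fin\<rparr>"

lemma wcet_nonneg: "valid_taskset T \<Longrightarrow> v \<in> subjobs T \<Longrightarrow> 0 \<le> wcet T v"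
  by (cases v) (auto simp: valid_taskset_def subjobs_def)

lemma valid_single_piece_schedule:
  assumes T: "valid_taskset T"
    and window: "\<forall>v\<in>subjobs T. 0 \<le> st v \<and> fin v - st v = wcet T v"
    and proc: "\<forall>v\<in>subjobs T. 0 < wcet T v \<longrightarrow> proc v < M"
    and disjoint: "\<forall>u\<in>subjobs T. \<forall>v\<in>subjobs T. 0 < wcet T u \<and> 0 < wcet T v \<and> u \<noteq> v \<and>
        (proc u = proc v \<or> task_of u = task_of v) \<longrightarrow> fin u \<le> st v \<or> fin v \<le> st u"
    and sequential: "\<forall>i<ntasks T. fin (Pre i) \<le> st (Crit i) \<and> fin (Crit i) \<le> st (Post i)"
    and mutex: "\<forall>i<ntasks T. \<forall>j<ntasks T. i \<noteq> j \<and> sema T i = sema T j \<longrightarrow>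
        fin (Crit i) \<le> st (Crit j) \<or> fin (Crit j) \<le> st (Crit i)"
  shows "valid_schedule T M (single_piece_schedule T proc st fin)"
proof -
  let ?B = "{v \<in> subjobs T. 0 < wcet T v}"
  let ?S = "single_piece_schedule T proc st fin"
  have pieces: "pieces ?S = (\<lambda>v. (v, proc v, st v, fin v)) ` ?B"
    and [simp]: "sstart ?S = st" "sfin ?S = fin"
    by (simp_all add: single_piece_schedule_def)
  have work: "sum piece_length {x \<in> pieces ?S. fst x = v} = wcet T v" if "v \<in> subjobs T" for v
  proof (cases "0 < wcet T v")
    case True
    then have "{x \<in> pieces ?S. fst x = v} = {(v, proc v, st v, fin v)}"
      using that unfolding pieces by auto
    then show ?thesis using window that by simp
  next
    case False
    then have "{x \<in> pieces ?S. fst x = v} = {}" unfolding pieces by auto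
    moreover have "wcet T v = 0" using False wcet_nonneg[OF T that] by simp
    ultimately show ?thesis by (simp only: sum.empty)
  qed
  show ?thesis
    unfolding valid_schedule_def
  proof (intro conjI)
    show "finite (pieces ?S)" unfolding pieces using finite_subjobs by simp
    show "\<forall>(v, p, a, b)\<in>pieces ?S. v \<in> subjobs T \<and> p < M \<and> a < b \<and> sstart ?S v \<le> a \<and> b \<le> sfin ?S v"
      unfolding pieces using proc window by force
    show "\<forall>v\<in>subjobs T. 0 \<le> sstart ?S v \<and> sstart ?S v \<le> sfin ?S v"
      using window wcet_nonneg[OF T] by force
    show "\<forall>v\<in>subjobs T. sum piece_length {x \<in> pieces ?S. fst x = v} = wcet T v"
      using work by blast
    show "\<forall>(u, p, a, b)\<in>pieces ?S. \<forall>(u', p', a', b')\<in>pieces ?S.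
        (u, p, a, b) \<noteq> (u', p', a', b') \<and> p = p' \<longrightarrow> time_disjoint (a, b) (a', b')"
      unfolding pieces time_disjoint_def using disjoint by fastforce
    show "\<forall>(u, p, a, b)\<in>pieces ?S. \<forall>(u', p', a', b')\<in>pieces ?S.
        (u, p, a, b) \<noteq> (u', p', a', b') \<and> task_of u = task_of u' \<longrightarrow> time_disjoint (a, b) (a', b')"
      unfolding pieces time_disjoint_def using disjoint by fastforce
  qed (use sequential mutex in \<open>simp_all add: time_disjoint_def\<close>)
qed

section \<open>Dependency graphs\<close>

lemma dep_graph_of_Pre_Crit_edge: "i < ntasks T \<Longrightarrow> (Pre i, Crit i) \<in> dep_graph_of T ord"
  unfolding dep_graph_of_def by blast

lemma dep_graph_of_chain_edge:
  "Suc j < length (ord k) \<Longrightarrow> (Crit (ord k ! j), Crit (ord k ! Suc j)) \<in> dep_graph_of T ord"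
  unfolding dep_graph_of_def by blast

lemma dep_graph_of_edge_cases:
  assumes "(u, v) \<in> dep_graph_of T ord"
  obtains (task_pre) i where "u = Pre i" and "v = Crit i"
    | (task_post) i where "u = Crit i" and "v = Post i"
    | (chain) k j where "Suc j < length (ord k)" and "u = Crit (ord k ! j)" and "v = Crit (ord k ! Suc j)"
  using assms unfolding dep_graph_of_def by blast

lemma finite_paths: "finite {p. is_path T G p}"
proof (rule finite_subset)
  show "{p. is_path T G p} \<subseteq> {xs. set xs \<subseteq> subjobs T \<and> length xs \<le> card (subjobs T)}"
  proof (rule subsetI, unfold mem_Collect_eq)
    fix p assume "is_path T G p"
    then have "distinct p" and "set p \<subseteq> subjobs T" by (auto simp: is_path_def)
    then show "set p \<subseteq> subjobs T \<and> length p \<le> card (subjobs T)"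
      using distinct_card card_mono[OF finite_subjobs] by metis
  qed
  show "finite {xs. set xs \<subseteq> subjobs T \<and> length xs \<le> card (subjobs T)}"
    by (rule finite_lists_length_le[OF finite_subjobs])
qed

lemma path_length_le_len: "is_path T G p \<Longrightarrow> path_length T p \<le> len T G"
  unfolding len_def by (rule Max_ge) (use finite_paths in auto)

lemma Pre_notin_tl_path:
  assumes "is_path T (dep_graph_of T ord) p"
  shows "Pre i \<notin> set (tl p)"
proof
  assume "Pre i \<in> set (tl p)"
  then obtain j where "j < length (tl p)" and "tl p ! j = Pre i"
    by (auto simp: in_set_conv_nth)
  then have "Suc j < length p" and "p ! Suc j = Pre i" by (auto simp: nth_tl)
  then have "(p ! j, Pre i) \<in> dep_graph_of T ord"
    using assms unfolding is_path_def by metis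
  then show False by (cases rule: dep_graph_of_edge_cases) auto
qed

lemma path_from_Pre_of_chain_end:
  assumes p: "is_path T (dep_graph_of T ord) p" and hd: "hd p = Pre i"
    and chain_end: "\<forall>k j. Suc j < length (ord k) \<longrightarrow> ord k ! j \<noteq> i"
  shows "set p \<subseteq> {Pre i, Crit i, Post i}"
proof -
  have "p ! k \<in> {Pre i, Crit i, Post i}" if "k < length p" for k
    using that
  proof (induction k)
    case 0
    then show ?case using hd p by (simp add: hd_conv_nth is_path_def)
  next
    case (Suc k)
    then have "(p ! k, p ! Suc k) \<in> dep_graph_of T ord"
      using p unfolding is_path_def by blast
    then show ?case using Suc chain_end by (cases rule: dep_graph_of_edge_cases) auto
  qed
  then show ?thesis by (metis in_set_conv_nth subsetI)
qed

lemma feasible_for_graph_edge: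
  "feasible_for_graph T M G S \<Longrightarrow> (u, v) \<in> G \<Longrightarrow> sfin S u \<le> sstart S v"
  unfolding feasible_for_graph_def by blast

lemma feasible_crit_chain:
  assumes F: "feasible_for_graph T M (dep_graph_of T ord) S"
    and ord: "set (ord k) \<subseteq> {..<ntasks T}" and "j < l" and "l < length (ord k)"
  shows "sfin S (Crit (ord k ! j)) \<le> sstart S (Crit (ord k ! l))"
  using assms(3,4)
proof (induction l)
  case 0
  then show ?case by simp
next
  case (Suc l)
  have step: "sfin S (Crit (ord k ! l)) \<le> sstart S (Crit (ord k ! Suc l))"
    using feasible_for_graph_edge[OF F dep_graph_of_chain_edge] Suc.prems(2) .
  show ?case
  proof (cases "j = l")
    case False
    have "ord k ! l \<in> set (ord k)" using Suc.prems(2) by simp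
    then have "Crit (ord k ! l) \<in> subjobs T" using ord by (auto simp: subjobs_def)
    then have "sstart S (Crit (ord k ! l)) \<le> sfin S (Crit (ord k ! l))"
      using F valid_schedule_subjobD(2) unfolding feasible_for_graph_def by blast
    then show ?thesis using Suc False step by simp
  qed (use step in simp)
qed

section \<open>The lower-bound task set\<close>

definition hard_taskset :: "nat \<Rightarrow> real \<Rightarrow> taskset" where
  "hard_taskset M d =
     \<lparr>ntasks = M^2 - M + 1,
      cpre = (\<lambda>i. if i = 0 then 1 + real (M^2 - M) * d else 1),
      crit = (\<lambda>i. if i = 0 then real M - 1 else d),
      cpost = (\<lambda>_. 0),
      sema = (\<lambda>_. 0)\<rparr>"

lemma hard_taskset_simps:
  "ntasks (hard_taskset M d) = Suc (M^2 - M)"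
  "cpre (hard_taskset M d) i = (if i = 0 then 1 + real (M^2 - M) * d else 1)"
  "crit (hard_taskset M d) i = (if i = 0 then real M - 1 else d)"
  "cpost (hard_taskset M d) i = 0"
  "sema (hard_taskset M d) i = 0"
  by (simp_all add: hard_taskset_def)

lemma valid_hard_taskset: "1 \<le> M \<Longrightarrow> 0 \<le> d \<Longrightarrow> valid_taskset (hard_taskset M d)"
  unfolding valid_taskset_def hard_taskset_simps by auto

lemma hard_taskset_sum_crit_post:
  "sum (wcet (hard_taskset M d)) (Crit ` {..<Suc (M^2 - M)} \<union> Post ` {..<Suc (M^2 - M)})
     = real M - 1 + real (M^2 - M) * d"
proof -
  let ?T = "hard_taskset M d" and ?I = "{..<Suc (M^2 - M)}"
  have "sum (wcet ?T) (Crit ` ?I \<union> Post ` ?I) = sum (wcet ?T) (Crit ` ?I) + sum (wcet ?T) (Post ` ?I)"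
    by (rule sum.union_disjoint) auto
  also have "sum (wcet ?T) (Post ` ?I) = 0"
    by (rule sum.neutral) (auto simp: hard_taskset_simps)
  also have "sum (wcet ?T) (Crit ` ?I) = (\<Sum>i\<in>?I. crit ?T i)"
    by (simp add: sum.reindex inj_on_def del: sum.lessThan_Suc)
  also have "\<dots> = real M - 1 + real (M^2 - M) * d"
    by (simp add: sum.lessThan_Suc_shift hard_taskset_simps del: sum.lessThan_Suc)
  finally show ?thesis by simp
qed

definition zero_last_order :: "nat \<Rightarrow> nat \<Rightarrow> nat list" where
  "zero_last_order N k = (if k = 0 then [1..<N] @ [0] else [])"

lemma is_dep_graph_zero_last_order:
  "is_dep_graph (hard_taskset M d) (dep_graph_of (hard_taskset M d) (zero_last_order (Suc (M^2 - M))))"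
  unfolding is_dep_graph_def
  by (rule exI[of _ "zero_last_order (Suc (M^2 - M))"])
    (auto simp: zero_last_order_def hard_taskset_simps)

lemma path_length_zero_last_order_le:
  assumes "1 \<le> M" and "0 \<le> d"
    and p: "is_path (hard_taskset M d) (dep_graph_of (hard_taskset M d) (zero_last_order (Suc (M^2 - M)))) p"
  shows "path_length (hard_taskset M d) p \<le> real M + real (M^2 - M) * d"
proof -
  let ?T = "hard_taskset M d" and ?N = "Suc (M^2 - M)"
  let ?CP = "Crit ` {..<?N} \<union> Post ` {..<?N}"
  have nonneg: "0 \<le> wcet ?T v" for v
    using assms by (cases v) (auto simp: hard_taskset_simps)
  have "p \<noteq> []" and "distinct p" and "set p \<subseteq> subjobs ?T"
    using p by (auto simp: is_path_def)
  then have p_eq: "p = hd p # tl p" by simp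
  then have set_p: "set p = insert (hd p) (set (tl p))" and "hd p \<notin> set (tl p)"
    using \<open>distinct p\<close> by (metis list.simps(15), metis distinct.simps(2))
  have "hd p \<in> subjobs ?T" using \<open>set p \<subseteq> subjobs ?T\<close> set_p by blast
  have length_eq: "path_length ?T p = sum (wcet ?T) (set p)"
    using \<open>distinct p\<close> by (simp add: path_length_def sum_list_distinct_conv_sum_set)
  have "set (tl p) \<subseteq> ?CP"
    using Pre_notin_tl_path[OF p] \<open>set p \<subseteq> subjobs ?T\<close> set_p
    unfolding subjobs_eq hard_taskset_simps by blast
  then have tl_le: "sum (wcet ?T) (set (tl p)) \<le> real M - 1 + real (M^2 - M) * d"
    using sum_mono2[of ?CP "set (tl p)" "wcet ?T"] nonneg hard_taskset_sum_crit_post by simp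
  consider "hd p = Pre 0" | i where "hd p = Pre i" "i \<noteq> 0" | "hd p \<in> ?CP"
    using \<open>hd p \<in> subjobs ?T\<close> unfolding subjobs_eq hard_taskset_simps
    by (cases "hd p") auto
  then show ?thesis
  proof cases
    case 1
    have "\<forall>k j. Suc j < length (zero_last_order ?N k) \<longrightarrow> zero_last_order ?N k ! j \<noteq> 0"
      by (auto simp: zero_last_order_def nth_append)
    then have "set p \<subseteq> {Pre 0, Crit 0, Post 0}"
      using path_from_Pre_of_chain_end[OF p 1] by blast
    then have "sum (wcet ?T) (set p) \<le> sum (wcet ?T) {Pre 0, Crit 0, Post 0}"
      by (intro sum_mono2) (use nonneg in auto)
    then show ?thesis using length_eq by (simp add: hard_taskset_simps)
  next
    case 2
    then show ?thesis
      using length_eq set_p \<open>hd p \<notin> set (tl p)\<close> tl_le by (simp add: hard_taskset_simps)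
  next
    case 3
    then have "set p \<subseteq> ?CP"
      unfolding set_p insert_subset using \<open>set (tl p) \<subseteq> ?CP\<close> by blast
    then have "sum (wcet ?T) (set p) \<le> real M - 1 + real (M^2 - M) * d"
      using sum_mono2[of ?CP "set p" "wcet ?T"] nonneg hard_taskset_sum_crit_post by simp
    then show ?thesis using length_eq by simp
  qed
qed

lemma len_zero_last_order_le:
  assumes "1 \<le> M" and "0 \<le> d"
  shows "len (hard_taskset M d) (dep_graph_of (hard_taskset M d) (zero_last_order (Suc (M^2 - M))))
           \<le> real M + real (M^2 - M) * d"
proof -
  have "is_path (hard_taskset M d) (dep_graph_of (hard_taskset M d) (zero_last_order (Suc (M^2 - M)))) [Pre 0]"
    unfolding is_path_def subjobs_def by (simp add: hard_taskset_simps)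
  then show ?thesis
    unfolding len_def using finite_paths path_length_zero_last_order_le[OF assms]
    by (subst Max_le_iff) auto
qed

lemma opt_dep_graph_zero_last:
  assumes "1 \<le> M" and "0 < d" and opt: "is_opt_dep_graph (hard_taskset M d) G"
  obtains ord where "G = dep_graph_of (hard_taskset M d) ord"
    and "set (ord 0) = {..<Suc (M^2 - M)}" and "length (ord 0) = Suc (M^2 - M)"
    and "ord 0 ! (M^2 - M) = 0"
proof -
  let ?T = "hard_taskset M d" and ?N = "Suc (M^2 - M)"
  obtain ord where ord: "\<forall>k. distinct (ord k) \<and> set (ord k) = {i. i < ntasks ?T \<and> sema ?T i = k}"
    and G: "G = dep_graph_of ?T ord"
    using opt unfolding is_opt_dep_graph_def is_dep_graph_def by blast
  have "distinct (ord 0)" and set0: "set (ord 0) = {..<?N}"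
    using ord by (auto simp: hard_taskset_simps)
  then have len0: "length (ord 0) = ?N" using distinct_card by fastforce
  obtain j where j: "j < ?N" and ord_j: "ord 0 ! j = 0"
    using set0 len0 by (metis in_set_conv_nth lessThan_iff zero_less_Suc)
  \<comment> \<open>a successor \<open>k\<close> of task 0 in the chain yields the path \<open>Pre 0, Crit 0, Crit k\<close> of length \<open>M + n d + d\<close>\<close>
  have "\<not> Suc j < ?N"
  proof
    assume "Suc j < ?N"
    define k where "k = ord 0 ! Suc j"
    have "k \<noteq> 0"
      using nth_eq_iff_index_eq[OF \<open>distinct (ord 0)\<close>, of "Suc j" j] \<open>Suc j < ?N\<close> len0 ord_j
      unfolding k_def by simp
    have "k < ?N"
      using nth_mem[of "Suc j" "ord 0"] \<open>Suc j < ?N\<close> len0 set0 unfolding k_def by simp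
    have "(Pre 0, Crit 0) \<in> G" and "(Crit 0, Crit k) \<in> G"
      unfolding G k_def using dep_graph_of_Pre_Crit_edge[of 0 ?T ord]
        dep_graph_of_chain_edge[of j ord 0 ?T] \<open>Suc j < ?N\<close> len0 ord_j
      by (simp_all add: hard_taskset_simps)
    then have "is_path ?T G [Pre 0, Crit 0, Crit k]"
      using \<open>k \<noteq> 0\<close> \<open>k < ?N\<close> by (auto simp: is_path_def subjobs_def hard_taskset_simps less_Suc_eq)
    then have "real M + real (M^2 - M) * d + d \<le> len ?T G"
      using path_length_le_len \<open>k \<noteq> 0\<close> by (fastforce simp: path_length_def hard_taskset_simps)
    also have "\<dots> \<le> len ?T (dep_graph_of ?T (zero_last_order ?N))"
      using opt is_dep_graph_zero_last_order unfolding is_opt_dep_graph_def by blast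
    also have "\<dots> \<le> real M + real (M^2 - M) * d"
      using len_zero_last_order_le assms(1,2) by simp
    finally show False using \<open>0 < d\<close> by simp
  qed
  then have "j = M^2 - M" using j by simp
  then show thesis using that G set0 len0 ord_j by blast
qed

lemma opt_dep_graph_Pre_before_Crit0:
  assumes "1 \<le> M" and "0 < d" and "is_opt_dep_graph (hard_taskset M d) G"
    and F: "feasible_for_graph (hard_taskset M d) M G S" and i: "i < Suc (M^2 - M)"
  shows "sfin S (Pre i) \<le> sstart S (Crit 0)"
proof -
  let ?T = "hard_taskset M d" and ?n = "M^2 - M"
  obtain ord where G: "G = dep_graph_of ?T ord" and set0: "set (ord 0) = {..<Suc ?n}"
    and len0: "length (ord 0) = Suc ?n" and last0: "ord 0 ! ?n = 0"
    using opt_dep_graph_zero_last[OF assms(1-3)] by blast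
  have V: "valid_schedule ?T M S" using F unfolding feasible_for_graph_def by blast
  have seq: "sfin S (Pre i) \<le> sstart S (Crit i)"
    using valid_schedule_sequential(1)[OF V] i by (simp add: hard_taskset_simps)
  show ?thesis
  proof (cases "i = 0")
    case False
    obtain j where j: "j < Suc ?n" and ord_j: "ord 0 ! j = i"
      using set0 len0 i by (metis in_set_conv_nth lessThan_iff)
    with last0 False have "j < ?n" by (metis less_SucE)
    then have "sfin S (Crit i) \<le> sstart S (Crit 0)"
      using feasible_crit_chain[OF F[unfolded G], of 0 j ?n] set0 len0 ord_j last0
      by (simp add: hard_taskset_simps)
    moreover have "sstart S (Crit i) \<le> sfin S (Crit i)"
      using valid_schedule_subjobD(2)[OF V] i by (simp add: subjobs_def hard_taskset_simps)
    ultimately show ?thesis using seq by simp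
  qed (use seq in simp)
qed

definition hard_witness_proc :: "nat \<Rightarrow> subjob \<Rightarrow> nat" where
  "hard_witness_proc M v = (case v of Pre i \<Rightarrow> if i = 0 then 0 else 1 + (i - 1) div M | _ \<Rightarrow> 0)"

definition hard_witness_start :: "nat \<Rightarrow> real \<Rightarrow> subjob \<Rightarrow> real" where
  "hard_witness_start M d v = (case v of
      Pre i \<Rightarrow> if i = 0 then 0 else real ((i - 1) mod M)
    | Crit i \<Rightarrow> if i = 0 then 1 + real (M^2 - M) * d
               else real M + real (M^2 - M) * d + (real i - 1) * d
    | Post i \<Rightarrow> real M + real (M^2 - M) * d + real i * d)"

abbreviation hard_witness_fin :: "nat \<Rightarrow> real \<Rightarrow> subjob \<Rightarrow> real" where
  "hard_witness_fin M d v \<equiv> hard_witness_start M d v + wcet (hard_taskset M d) v"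

definition hard_witness_schedule :: "nat \<Rightarrow> real \<Rightarrow> schedule" where
  "hard_witness_schedule M d =
     single_piece_schedule (hard_taskset M d) (hard_witness_proc M) (hard_witness_start M d)
       (hard_witness_fin M d)"

lemma hard_witness_Crit_order:
  assumes "0 \<le> d" and "i < j"
  shows "hard_witness_fin M d (Crit i) \<le> hard_witness_start M d (Crit j)"
proof -
  have "real i * d \<le> (real j - 1) * d"
    using assms by (intro mult_right_mono) auto
  then show ?thesis
    using assms by (auto simp: hard_witness_start_def hard_taskset_simps algebra_simps)
qed

lemma hard_witness_Pre_before_Crit:
  assumes "1 \<le> M" and "0 \<le> d" and "k = 0 \<or> j \<noteq> 0"
  shows "hard_witness_fin M d (Pre k) \<le> hard_witness_start M d (Crit j)"
proof (cases "j = 0")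
  case False
  have "(k - 1) mod M + 1 \<le> M" using \<open>1 \<le> M\<close> by (simp add: Suc_le_eq)
  then have "real ((k - 1) mod M) + 1 \<le> real M" by (metis of_nat_1 of_nat_add of_nat_le_iff)
  moreover have "0 \<le> real (M^2 - M) * d" using \<open>0 \<le> d\<close> by simp
  ultimately have "hard_witness_fin M d (Pre k) \<le> real M + real (M^2 - M) * d"
    using assms(1) by (simp add: hard_witness_start_def hard_taskset_simps)
  also have "\<dots> \<le> hard_witness_start M d (Crit j)"
    using False \<open>0 \<le> d\<close> by (simp add: hard_witness_start_def)
  finally show ?thesis .
qed (use assms in \<open>simp add: hard_witness_start_def hard_taskset_simps\<close>)

lemma hard_witness_Pre_disjoint:
  assumes "k \<noteq> l" and "hard_witness_proc M (Pre k) = hard_witness_proc M (Pre l)"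
  shows "hard_witness_fin M d (Pre k) \<le> hard_witness_start M d (Pre l) \<or>
         hard_witness_fin M d (Pre l) \<le> hard_witness_start M d (Pre k)"
proof -
  have "k \<noteq> 0" and "l \<noteq> 0"
    using assms by (auto simp: hard_witness_proc_def split: if_splits)
  then have "(k - 1) div M = (l - 1) div M" and "k - 1 \<noteq> l - 1"
    using assms by (auto simp: hard_witness_proc_def)
  then have "(k - 1) mod M \<noteq> (l - 1) mod M" by (metis div_mult_mod_eq)
  then have "real ((k - 1) mod M) + 1 \<le> real ((l - 1) mod M) \<or>
             real ((l - 1) mod M) + 1 \<le> real ((k - 1) mod M)"
    by linarith
  then show ?thesis
    using \<open>k \<noteq> 0\<close> \<open>l \<noteq> 0\<close> by (auto simp: hard_witness_start_def hard_taskset_simps)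
qed

lemma hard_witness_proc_less:
  assumes "1 \<le> M" and "i < Suc (M^2 - M)"
  shows "hard_witness_proc M (Pre i) < M"
proof (cases "i = 0")
  case False
  have "i - 1 < (M - 1) * M"
    using assms False by (simp add: power2_eq_square diff_mult_distrib)
  then have "(i - 1) div M < M - 1" by (simp add: less_mult_imp_div_less)
  then show ?thesis using False by (simp add: hard_witness_proc_def)
qed (use assms in \<open>simp add: hard_witness_proc_def\<close>)

lemma hard_witness_Crit_disjoint:
  assumes "0 \<le> d" and "i \<noteq> j"
  shows "hard_witness_fin M d (Crit i) \<le> hard_witness_start M d (Crit j) \<or>
         hard_witness_fin M d (Crit j) \<le> hard_witness_start M d (Crit i)"
  using hard_witness_Crit_order[OF \<open>0 \<le> d\<close>] \<open>i \<noteq> j\<close> by (meson linorder_cases)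

lemma hard_witness_disjoint:
  assumes "1 \<le> M" and "0 \<le> d"
    and busy: "0 < wcet (hard_taskset M d) u" "0 < wcet (hard_taskset M d) v" and "u \<noteq> v"
    and shared: "hard_witness_proc M u = hard_witness_proc M v \<or> task_of u = task_of v"
  shows "hard_witness_fin M d u \<le> hard_witness_start M d v \<or>
         hard_witness_fin M d v \<le> hard_witness_start M d u"
proof -
  have Pre_before_Crit: "hard_witness_fin M d (Pre k) \<le> hard_witness_start M d (Crit j)"
    if "hard_witness_proc M (Pre k) = hard_witness_proc M (Crit j) \<or> k = j" for k j
    using that hard_witness_Pre_before_Crit[OF assms(1,2), of k j]
    by (auto simp: hard_witness_proc_def split: if_splits)
  consider (Pre_Pre) k l where "u = Pre k" "v = Pre l"
    | (Pre_Crit) k j where "u = Pre k" "v = Crit j"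
    | (Crit_Pre) k j where "u = Crit j" "v = Pre k"
    | (Crit_Crit) i j where "u = Crit i" "v = Crit j"
    using busy by (cases u; cases v) (auto simp: hard_taskset_simps)
  then show ?thesis
  proof cases
    case Pre_Pre
    then show ?thesis using \<open>u \<noteq> v\<close> shared hard_witness_Pre_disjoint by auto
  next
    case Pre_Crit
    then show ?thesis using shared Pre_before_Crit[of k j] by auto
  next
    case Crit_Pre
    then show ?thesis using shared Pre_before_Crit[of k j] by auto
  next
    case Crit_Crit
    then show ?thesis using \<open>u \<noteq> v\<close> hard_witness_Crit_disjoint[OF \<open>0 \<le> d\<close>] by auto
  qed
qed

lemma valid_hard_witness_schedule:
  assumes "1 \<le> M" and "0 < d"
  shows "valid_schedule (hard_taskset M d) M (hard_witness_schedule M d)"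
  unfolding hard_witness_schedule_def
proof (rule valid_single_piece_schedule)
  let ?T = "hard_taskset M d" and ?st = "hard_witness_start M d" and ?fin = "hard_witness_fin M d"
  show "valid_taskset ?T" using assms by (simp add: valid_hard_taskset)
  show "\<forall>v\<in>subjobs ?T. 0 \<le> ?st v \<and> ?fin v - ?st v = wcet ?T v"
  proof
    fix v show "0 \<le> ?st v \<and> ?fin v - ?st v = wcet ?T v"
      using assms by (cases v) (auto simp: hard_witness_start_def)
  qed
  show "\<forall>v\<in>subjobs ?T. 0 < wcet ?T v \<longrightarrow> hard_witness_proc M v < M"
  proof (intro ballI impI)
    fix v assume "v \<in> subjobs ?T" and "0 < wcet ?T v"
    then show "hard_witness_proc M v < M"
      using hard_witness_proc_less[OF \<open>1 \<le> M\<close>] \<open>1 \<le> M\<close>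
      by (cases v) (auto simp: subjobs_def hard_taskset_simps hard_witness_proc_def)
  qed
  show "\<forall>u\<in>subjobs ?T. \<forall>v\<in>subjobs ?T. 0 < wcet ?T u \<and> 0 < wcet ?T v \<and> u \<noteq> v \<and>
      (hard_witness_proc M u = hard_witness_proc M v \<or> task_of u = task_of v) \<longrightarrow>
      ?fin u \<le> ?st v \<or> ?fin v \<le> ?st u"
    using hard_witness_disjoint[OF \<open>1 \<le> M\<close>] \<open>0 < d\<close> by auto
  show "\<forall>i<ntasks ?T. ?fin (Pre i) \<le> ?st (Crit i) \<and> ?fin (Crit i) \<le> ?st (Post i)"
  proof (intro allI impI conjI)
    fix i
    show "?fin (Pre i) \<le> ?st (Crit i)"
      using hard_witness_Pre_before_Crit[OF \<open>1 \<le> M\<close>, of d i i] \<open>0 < d\<close> by fastforce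
    show "?fin (Crit i) \<le> ?st (Post i)"
      by (simp add: hard_witness_start_def hard_taskset_simps algebra_simps)
  qed
  show "\<forall>i<ntasks ?T. \<forall>j<ntasks ?T. i \<noteq> j \<and> sema ?T i = sema ?T j \<longrightarrow>
      ?fin (Crit i) \<le> ?st (Crit j) \<or> ?fin (Crit j) \<le> ?st (Crit i)"
    using hard_witness_Crit_disjoint \<open>0 < d\<close> by auto
qed

lemma makespan_hard_witness_schedule:
  assumes "0 \<le> d"
  shows "makespan (hard_taskset M d) (hard_witness_schedule M d) \<le> real M + 2 * real (M^2 - M) * d"
  unfolding makespan_def
proof (subst Max_le_iff)
  show "(\<lambda>i. sfin (hard_witness_schedule M d) (Post i)) ` {..<ntasks (hard_taskset M d)} \<noteq> {}"
    by (auto simp: hard_taskset_simps)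
  show "\<forall>a\<in>(\<lambda>i. sfin (hard_witness_schedule M d) (Post i)) ` {..<ntasks (hard_taskset M d)}.
      a \<le> real M + 2 * real (M^2 - M) * d"
  proof
    fix a assume "a \<in> (\<lambda>i. sfin (hard_witness_schedule M d) (Post i)) ` {..<ntasks (hard_taskset M d)}"
    then obtain i where "i < Suc (M^2 - M)" and a: "a = real M + real (M^2 - M) * d + real i * d"
      by (auto simp: hard_witness_schedule_def single_piece_schedule_def hard_witness_start_def
          hard_taskset_simps)
    then have "real i * d \<le> real (M^2 - M) * d"
      using assms by (intro mult_right_mono) auto
    then show "a \<le> real M + 2 * real (M^2 - M) * d" unfolding a by linarith
  qed
qed simp

lemma OPT_hard_taskset:
  assumes "1 \<le> M" and "0 < d"
  shows "real M - 1 \<le> OPT (hard_taskset M d) M"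
    and "OPT (hard_taskset M d) M \<le> real M + 2 * real (M^2 - M) * d"
proof -
  let ?T = "hard_taskset M d"
  have witness: "valid_schedule ?T M (hard_witness_schedule M d)"
    using valid_hard_witness_schedule[OF assms] .
  have "real M - 1 \<le> makespan ?T S" if V: "valid_schedule ?T M S" for S
    using makespan_ge_Crit[OF V, of 0] valid_schedule_subjobD(1)[OF V, of "Crit 0"]
    by (simp add: subjobs_def hard_taskset_simps)
  then show "real M - 1 \<le> OPT ?T M" using OPT_ge[OF witness] by blast
  show "OPT ?T M \<le> real M + 2 * real (M^2 - M) * d"
    using OPT_le_makespan[OF _ witness] makespan_hard_witness_schedule[of d M] \<open>0 < d\<close>
    by (simp add: hard_taskset_simps)
qed

lemma sum_wcet_Pre_hard_taskset:
  "sum (wcet (hard_taskset M d)) (Pre ` {..<Suc (M^2 - M)})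
     = real (M^2 - M) + 1 + real (M^2 - M) * d"
  by (simp add: sum.reindex inj_on_def sum.lessThan_Suc_shift hard_taskset_simps
      del: sum.lessThan_Suc)

lemma opt_dep_graph_makespan_ge_global:
  assumes "1 \<le> M" and "0 < d" and opt: "is_opt_dep_graph (hard_taskset M d) G"
    and F: "feasible_for_graph (hard_taskset M d) M G S"
  shows "(2 - 2 / real M + 1 / (real M)^2) * real M \<le> makespan (hard_taskset M d) S"
proof -
  let ?T = "hard_taskset M d" and ?Y = "Pre ` {..<Suc (M^2 - M)}" and ?t = "sstart S (Crit 0)"
  have V: "valid_schedule ?T M S" using F unfolding feasible_for_graph_def by blast
  have "0 \<le> ?t" using valid_schedule_subjobD(1)[OF V] by (simp add: subjobs_def hard_taskset_simps)
  have "?Y \<subseteq> subjobs ?T" by (auto simp: subjobs_def hard_taskset_simps)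
  have "real (M^2 - M) = real M * real M - real M"
    using \<open>1 \<le> M\<close> by (simp add: of_nat_diff power2_eq_square)
  then have "real M * real M - real M + 1 \<le> sum (wcet ?T) ?Y"
    using \<open>0 < d\<close> by (simp add: sum_wcet_Pre_hard_taskset)
  also have "\<dots> \<le> real M * ?t"
    using opt_dep_graph_Pre_before_Crit0[OF assms]
    by (intro work_before_le[OF V \<open>?Y \<subseteq> subjobs ?T\<close> \<open>0 \<le> ?t\<close>]) blast
  finally have "real M - 1 + 1 / real M \<le> ?t"
    using \<open>1 \<le> M\<close> by (simp add: field_simps)
  moreover have "?t + (real M - 1) \<le> makespan ?T S"
    using makespan_ge_Crit[OF V, of 0] by (simp add: hard_taskset_simps)
  moreover have "(2 - 2 / real M + 1 / (real M)^2) * real M = 2 * real M - 2 + 1 / real M"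
    using \<open>1 \<le> M\<close> by (simp add: field_simps power2_eq_square)
  ultimately show ?thesis by linarith
qed

lemma opt_dep_graph_makespan_ge_semi_partitioned:
  assumes "1 \<le> M" and "0 < d" and opt: "is_opt_dep_graph (hard_taskset M d) G"
    and F: "feasible_for_graph (hard_taskset M d) M G S" and SP: "semi_partitioned S"
  shows "(2 - 1 / real M) * real M \<le> makespan (hard_taskset M d) S"
proof -
  let ?T = "hard_taskset M d" and ?Y = "Pre ` {..<Suc (M^2 - M)}" and ?t = "sstart S (Crit 0)"
  have V: "valid_schedule ?T M S" using F unfolding feasible_for_graph_def by blast
  have "0 \<le> ?t" using valid_schedule_subjobD(1)[OF V] by (simp add: subjobs_def hard_taskset_simps)
  have "?Y \<subseteq> subjobs ?T" by (auto simp: subjobs_def hard_taskset_simps)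
  have "M * (M - 1) < card ?Y"
    by (simp add: card_image inj_on_def power2_eq_square diff_mult_distrib2)
  then have "real M \<le> ?t"
    using semi_partitioned_work_before[OF V SP \<open>?Y \<subseteq> subjobs ?T\<close> \<open>0 \<le> ?t\<close>]
      opt_dep_graph_Pre_before_Crit0[OF assms(1-4)] \<open>0 < d\<close>
    by (auto simp: hard_taskset_simps)
  moreover have "?t + (real M - 1) \<le> makespan ?T S"
    using makespan_ge_Crit[OF V, of 0] by (simp add: hard_taskset_simps)
  moreover have "(2 - 1 / real M) * real M = 2 * real M - 1"
    using \<open>1 \<le> M\<close> by (simp add: field_simps)
  ultimately show ?thesis by linarith
qed

lemma approx_ratio_lower_bound:
  fixes c e m opt mk :: real
  assumes "0 \<le> c" and "c \<le> 2" and "1 \<le> m" and "0 < e"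
    and "0 < opt" and "opt \<le> m + e / 2" and "c * m \<le> mk"
  shows "(c - e) * opt \<le> mk"
proof (cases "c - e \<le> 0")
  case True
  then show ?thesis using assms by (smt (verit) mult_nonneg_nonneg mult_nonpos_nonneg)
next
  case False
  then have "(c - e) * opt \<le> (c - e) * (m + e / 2)" using assms by simp
  also have "\<dots> = c * m - e * m + (c - e) * e / 2" by (simp add: algebra_simps)
  also have "\<dots> \<le> c * m"
  proof -
    have "(c - e) * e \<le> 2 * e" using assms by (intro mult_right_mono) auto
    moreover have "1 * e \<le> m * e" using assms by (intro mult_right_mono) auto
    ultimately show ?thesis by (simp add: algebra_simps)
  qed
  finally show ?thesis using assms by simp
qed

theorem mainTheorem6:
  fixes M :: nat and \<epsilon> :: real
  assumes "M \<ge> 2" and "\<epsilon> > 0"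
  shows "\<exists>T. valid_taskset T \<and> ntasks T = M^2 - M + 1 \<and>
           (\<forall>i < ntasks T. sema T i = 0) \<and> OPT T M > 0 \<and>
           (\<forall>G S. is_opt_dep_graph T G \<and> feasible_for_graph T M G S \<longrightarrow>
              makespan T S \<ge> (2 - 2 / real M + 1 / (real M)^2 - \<epsilon>) * OPT T M) \<and>
           (\<forall>G S. is_opt_dep_graph T G \<and> feasible_for_graph T M G S \<and>
                  (semi_partitioned S \<or> partitioned S) \<longrightarrow>
              makespan T S \<ge> (2 - 1 / real M - \<epsilon>) * OPT T M)"
proof -
  have "1 \<le> M" and M: "1 \<le> real M" using assms(1) by auto
  define d where "d = \<epsilon> / (4 * (real (M^2 - M) + 1))"
  have "0 < d" using assms(2) by (simp add: d_def)
  have "4 * (real (M^2 - M) + 1) * d = \<epsilon>" by (simp add: d_def)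
  then have "4 * (real (M^2 - M) * d) + 4 * d = \<epsilon>" by (simp add: algebra_simps)
  then have OPT_le: "OPT (hard_taskset M d) M \<le> real M + \<epsilon> / 2"
    using OPT_hard_taskset(2)[OF \<open>1 \<le> M\<close> \<open>0 < d\<close>] \<open>0 < d\<close> by linarith
  have OPT_pos: "0 < OPT (hard_taskset M d) M"
    using OPT_hard_taskset(1)[OF \<open>1 \<le> M\<close> \<open>0 < d\<close>] assms(1) by linarith
  have "1 / real M \<le> 1" and "1 / (real M)^2 \<le> 2 / real M"
    using M by (simp_all add: field_simps power2_eq_square)
  then have "0 \<le> 2 - 2 / real M + 1 / (real M)^2" and "2 - 2 / real M + 1 / (real M)^2 \<le> 2"
    and "0 \<le> 2 - 1 / real M" and "2 - 1 / real M \<le> 2"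
    by (simp_all add: zero_le_divide_iff)
  with OPT_le OPT_pos show ?thesis
    using approx_ratio_lower_bound[OF _ _ M \<open>\<epsilon> > 0\<close>]
      opt_dep_graph_makespan_ge_global[OF \<open>1 \<le> M\<close> \<open>0 < d\<close>]
      opt_dep_graph_makespan_ge_semi_partitioned[OF \<open>1 \<le> M\<close> \<open>0 < d\<close>]
      partitioned_imp_semi_partitioned valid_hard_taskset[OF \<open>1 \<le> M\<close>] \<open>0 < d\<close>
    by (intro exI[of _ "hard_taskset M d"]) (auto simp: hard_taskset_simps)
qed

end
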